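(* Let $\alpha>0$. Then there exists a unique $\tilde\theta_\alpha\in(0,\theta^+_\alpha)\cap(0,\frac\pi4)$ such that $L(\alpha,\tilde\theta_\alpha)=0$.
   Context: For $\alpha>0$ and $\theta\in\mathbb{R}$ set $C_{\alpha,\theta}=\frac{\sin(2\theta)}{2\alpha}$ and $P_{\alpha,\theta}(x)=\alpha^2+\cos(2\theta)x^2-C_{\alpha,\theta}^2x^4$. Let $\theta^+_\alpha=\pi/2$ if $\alpha>1$, and $\theta^+_\alpha=\frac12\arccos(1-2\alpha^2)$ if $\alpha\le1$. Let $\Omega=\{(\alpha,\theta):\alpha>0,|\theta|<\theta^+_\alpha\}$; on $\Omega$ one has $P_{\alpha,\theta}>0$ on $[-1,1]$. For $(\alpha,\theta)\in\Omega$ define $$L(\alpha,\theta)=\int_{-1}^1\frac{2\alpha C_{\alpha,\theta}^2x^2-\alpha\cos(2\theta)+C_{\alpha,\theta}^2x^2\sqrt{P_{\alpha,\theta}(x)}}{\sqrt{(1-x^2)P_{\alpha,\theta}(x)}\,\big(\alpha+\sqrt{P_{\alpha,\theta}(x)}\big)}\,dx.$$ *)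

theory Defs
  imports "HOL-Analysis.Analysis"
begin

definition Cconst :: "real \<Rightarrow> real \<Rightarrow> real" where
  "Cconst \<alpha> \<theta> = sin (2 * \<theta>) / (2 * \<alpha>)"

definition Ppoly :: "real \<Rightarrow> real \<Rightarrow> real \<Rightarrow> real" where
  "Ppoly \<alpha> \<theta> x = \<alpha>^2 + cos (2 * \<theta>) * x^2 - (Cconst \<alpha> \<theta>)^2 * x^4"

definition theta_plus :: "real \<Rightarrow> real" where
  "theta_plus \<alpha> = (if \<alpha> > 1 then pi / 2 else arccos (1 - 2 * \<alpha>^2) / 2)"

definition Omega :: "(real \<times> real) set" where
  "Omega = {(\<alpha>, \<theta>). \<alpha> > 0 \<and> \<bar>\<theta>\<bar> < theta_plus \<alpha>}"

(* The integrand of L; the integral over [-1,1] is an (absolutely convergent)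
   improper integral, taken here as the Lebesgue integral over [-1,1]. *)
definition Lintegrand :: "real \<Rightarrow> real \<Rightarrow> real \<Rightarrow> real" where
  "Lintegrand \<alpha> \<theta> x =
     (2 * \<alpha> * (Cconst \<alpha> \<theta>)^2 * x^2 - \<alpha> * cos (2 * \<theta>)
       + (Cconst \<alpha> \<theta>)^2 * x^2 * sqrt (Ppoly \<alpha> \<theta> x))
     / (sqrt ((1 - x^2) * Ppoly \<alpha> \<theta> x) * (\<alpha> + sqrt (Ppoly \<alpha> \<theta> x)))"

definition Lfun :: "real \<Rightarrow> real \<Rightarrow> real" where
  "Lfun \<alpha> \<theta> = (LBINT x=-1..1. Lintegrand \<alpha> \<theta> x)"

end

theory Submission
  imports Defs
begin

text \<open>
  The substitution \<open>x = sin \<phi>\<close> removes the endpoint singularity: \<open>L(\<alpha>, \<theta>)\<close> becomes the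
  integral over \<open>[-\<pi>/2, \<pi>/2]\<close> of \<open>K(\<theta>, sin \<phi>)\<close>, where \<open>K\<close> (\<open>Lreduced\<close> below) is continuous and
  satisfies \<open>K x\<^sup>2 = (\<alpha>\<^sup>2 + C\<^sup>2 x\<^sup>4) / \<surd>P(x) - \<alpha>\<close>. For \<open>0 \<le> \<theta> < min \<theta>\<^sup>+ (\<pi>/4)\<close> both \<open>C\<^sup>2\<close> and
  \<open>-cos 2\<theta>\<close> increase with \<open>\<theta>\<close>, so \<open>P(x)\<close> decreases and \<open>K\<close> increases strictly; hence \<open>L(\<alpha>, \<cdot>)\<close> is
  strictly increasing there and has at most one zero. At \<open>\<theta> = 0\<close> the integrand is negative.
  If \<open>2\<alpha>\<^sup>2 > 1\<close>, then \<open>\<pi>/4 < \<theta>\<^sup>+\<close> and at \<open>\<theta> = \<pi>/4\<close> the integrand is nonnegative and not identically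
  zero. Otherwise \<open>\<theta>\<^sup>+ \<le> \<pi>/4\<close> and \<open>P(1) \<rightarrow> 0\<close> as \<open>\<theta> \<rightarrow> \<theta>\<^sup>+\<close>; near \<open>\<phi> = \<pi>/2\<close> the integrand is then at
  least of order \<open>1 / (\<pi>/2 - \<phi> + \<surd>P(1))\<close>, whose integral grows like \<open>-log P(1)\<close> and eventually
  beats the uniform lower bound \<open>-4/\<alpha>\<close>. The intermediate value theorem provides the zero.
\<close>

definition admissible_angle :: "real \<Rightarrow> real \<Rightarrow> bool" where
  "admissible_angle \<alpha> \<theta> \<longleftrightarrow> 0 \<le> \<theta> \<and> \<theta> \<le> pi/4 \<and> \<theta> < theta_plus \<alpha>"

definition Lreduced :: "real \<Rightarrow> real \<Rightarrow> real \<Rightarrow> real" where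
  "Lreduced \<alpha> \<theta> x =
     (2 * \<alpha> * (Cconst \<alpha> \<theta>)^2 * x^2 - \<alpha> * cos (2 * \<theta>)
       + (Cconst \<alpha> \<theta>)^2 * x^2 * sqrt (Ppoly \<alpha> \<theta> x))
     / (sqrt (Ppoly \<alpha> \<theta> x) * (\<alpha> + sqrt (Ppoly \<alpha> \<theta> x)))"

definition Lnumerator :: "real \<Rightarrow> real \<Rightarrow> real \<Rightarrow> real" where
  "Lnumerator \<alpha> \<theta> y =
     3 * \<alpha>^2 * (Cconst \<alpha> \<theta>)^2 * y + ((Cconst \<alpha> \<theta>)^2)^2 * y^3 - \<alpha>^2 * cos (2 * \<theta>)"

lemma Cconst_sq: "(Cconst \<alpha> \<theta>)^2 = (1 - (cos (2*\<theta>))^2) / (4*\<alpha>^2)"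
  unfolding Cconst_def by (simp add: power_divide sin_squared_eq power_mult_distrib)

lemma Ppoly_one: "Ppoly \<alpha> \<theta> 1 = \<alpha>^2 + cos (2*\<theta>) - (Cconst \<alpha> \<theta>)^2"
  unfolding Ppoly_def by simp

lemma Ppoly_decomp: "Ppoly \<alpha> \<theta> x = (1 - x^2) * (\<alpha>^2 + (Cconst \<alpha> \<theta>)^2 * x^2) + x^2 * Ppoly \<alpha> \<theta> 1"
  unfolding Ppoly_def by (simp add: algebra_simps power4_eq_xxxx power2_eq_square)

lemma theta_plus_pos:
  assumes "\<alpha> > 0" shows "theta_plus \<alpha> > 0"
proof (cases "\<alpha> > 1")
  case False
  have v: "-1 \<le> 1 - 2*\<alpha>^2" "1 - 2*\<alpha>^2 < 1"
    using False assms by (auto simp: power_le_one)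
  then have "arccos (1 - 2*\<alpha>^2) > arccos 1"
    by (intro arccos_less_arccos) auto
  then show ?thesis using False unfolding theta_plus_def by simp
qed (simp add: theta_plus_def)

lemma admissible_angle_0: "\<alpha> > 0 \<Longrightarrow> admissible_angle \<alpha> 0"
  unfolding admissible_angle_def using theta_plus_pos by auto

lemma admissible_cos_double_nonneg:
  "admissible_angle \<alpha> \<theta> \<Longrightarrow> cos (2*\<theta>) \<ge> 0"
  unfolding admissible_angle_def by (intro cos_ge_zero) auto

lemma admissible_cos_double_gt:
  assumes "\<alpha> > 0" "admissible_angle \<alpha> \<theta>"
  shows "cos (2*\<theta>) > 1 - 2*\<alpha>^2"
proof (cases "\<alpha> > 1")
  case True
  then have "\<alpha>^2 > 1" by (simp add: one_less_power)
  then show ?thesis using admissible_cos_double_nonneg[OF assms(2)] by linarith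
next
  case False
  let ?v = "1 - 2*\<alpha>^2"
  have v: "-1 \<le> ?v" "?v \<le> 1" using False assms(1) by (auto simp: power_le_one)
  have "2*\<theta> < arccos ?v" "0 \<le> 2*\<theta>"
    using assms(2) False unfolding admissible_angle_def theta_plus_def by auto
  then have "cos (arccos ?v) < cos (2*\<theta>)"
    using arccos_bounded[OF v] by (intro cos_monotone_0_pi) auto
  then show ?thesis using v by simp
qed

lemma Ppoly_one_pos:
  assumes "\<alpha> > 0" "admissible_angle \<alpha> \<theta>"
  shows "Ppoly \<alpha> \<theta> 1 > 0"
proof -
  let ?c = "cos (2*\<theta>)"
  have "?c + 2*\<alpha>^2 > 1" "?c \<ge> 0"
    using admissible_cos_double_gt[OF assms] admissible_cos_double_nonneg[OF assms(2)] by auto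
  then have "(?c + 2*\<alpha>^2)^2 > 1"
    by (metis less_trans one_less_power pos2 zero_less_one)
  then have "\<alpha>^2 + ?c - (1 - ?c^2) / (4*\<alpha>^2) > 0"
    using assms(1) by (simp add: field_simps power2_eq_square)
  then show ?thesis unfolding Ppoly_one Cconst_sq .
qed

lemma Ppoly_pos:
  assumes "\<alpha> > 0" "admissible_angle \<alpha> \<theta>" "\<bar>x\<bar> \<le> 1"
  shows "Ppoly \<alpha> \<theta> x > 0"
proof (cases "x^2 = 1")
  case True
  then show ?thesis using Ppoly_one_pos[OF assms(1,2)] Ppoly_decomp[of \<alpha> \<theta> x] by simp
next
  case False
  moreover have "x^2 \<le> 1" using assms(3) by (simp add: abs_square_le_1)
  ultimately have "1 - x^2 > 0" by simp
  moreover have "\<alpha>^2 + (Cconst \<alpha> \<theta>)^2 * x^2 > 0" using assms(1) by (simp add: add_pos_nonneg)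
  ultimately have "(1 - x^2) * (\<alpha>^2 + (Cconst \<alpha> \<theta>)^2 * x^2) > 0" by simp
  moreover have "x^2 * Ppoly \<alpha> \<theta> 1 \<ge> 0" using Ppoly_one_pos[OF assms(1,2)] by simp
  ultimately show ?thesis using Ppoly_decomp[of \<alpha> \<theta> x] by linarith
qed

lemma Lreduced_mult_sq:
  assumes "\<alpha> > 0" "Ppoly \<alpha> \<theta> x > 0"
  shows "Lreduced \<alpha> \<theta> x * x^2 = (\<alpha>^2 + (Cconst \<alpha> \<theta>)^2 * x^4) / sqrt (Ppoly \<alpha> \<theta> x) - \<alpha>"
proof -
  define q where "q = sqrt (Ppoly \<alpha> \<theta> x)"
  define N where "N = 2*\<alpha>*(Cconst \<alpha> \<theta>)^2*x^2 - \<alpha>*cos (2*\<theta>) + (Cconst \<alpha> \<theta>)^2*x^2*q"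
  define A where "A = \<alpha>^2 + (Cconst \<alpha> \<theta>)^2 * x^4"
  have q: "q > 0" "q^2 = \<alpha>^2 + cos (2*\<theta>) * x^2 - (Cconst \<alpha> \<theta>)^2 * x^4"
    using assms(2) unfolding q_def Ppoly_def by simp_all
  have "N * x^2 - (\<alpha> + q) * (A - \<alpha>*q)
      = \<alpha> * (q^2 - (\<alpha>^2 + cos (2*\<theta>) * x^2 - (Cconst \<alpha> \<theta>)^2 * x^4))"
    unfolding N_def A_def by (simp add: algebra_simps power2_eq_square power4_eq_xxxx)
  then have e: "N * x^2 = (\<alpha> + q) * (A - \<alpha>*q)" using q(2) by simp
  have "\<alpha> + q \<noteq> 0" using q(1) assms(1) by simp
  have "Lreduced \<alpha> \<theta> x * x^2 = (N * x^2) / ((\<alpha> + q) * q)"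
    unfolding Lreduced_def q_def[symmetric] N_def[symmetric] by (simp add: ac_simps)
  also have "\<dots> = (A - \<alpha>*q) / q"
    unfolding e using \<open>\<alpha> + q \<noteq> 0\<close> by simp
  finally show ?thesis using q(1) unfolding A_def q_def by (simp add: diff_divide_distrib)
qed

lemma Lreduced_eq_quotient:
  assumes "\<alpha> > 0" "Ppoly \<alpha> \<theta> x > 0"
  shows "Lreduced \<alpha> \<theta> x = Lnumerator \<alpha> \<theta> (x^2)
    / (sqrt (Ppoly \<alpha> \<theta> x) * (\<alpha>^2 + (Cconst \<alpha> \<theta>)^2*x^4 + \<alpha> * sqrt (Ppoly \<alpha> \<theta> x)))"
proof -
  define q where "q = sqrt (Ppoly \<alpha> \<theta> x)"
  define N where "N = 2*\<alpha>*(Cconst \<alpha> \<theta>)^2*x^2 - \<alpha>*cos (2*\<theta>) + (Cconst \<alpha> \<theta>)^2*x^2*q"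
  define M where "M = Lnumerator \<alpha> \<theta> (x^2)"
  define D where "D = \<alpha>^2 + (Cconst \<alpha> \<theta>)^2*x^4 + \<alpha>*q"
  have q: "q > 0" "q^2 = \<alpha>^2 + cos (2*\<theta>) * x^2 - (Cconst \<alpha> \<theta>)^2 * x^4"
    using assms(2) unfolding q_def Ppoly_def by simp_all
  have D: "D > 0" using q(1) assms(1) unfolding D_def by (simp add: add_pos_nonneg)
  have "N * D - M * (\<alpha> + q)
      = \<alpha> * (Cconst \<alpha> \<theta>)^2 * x^2 * (q^2 - (\<alpha>^2 + cos (2*\<theta>) * x^2 - (Cconst \<alpha> \<theta>)^2 * x^4))"
    unfolding N_def M_def D_def Lnumerator_def
    by (simp add: algebra_simps power2_eq_square power4_eq_xxxx eval_nat_numeral)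
  then have "N * D = M * (\<alpha> + q)" using q(2) by simp
  then have "N * (q * D) = M * (q * (\<alpha> + q))" by (metis mult.left_commute)
  then have "N / (q * (\<alpha> + q)) = M / (q * D)"
    using q(1) assms(1) D by (simp add: frac_eq_eq)
  then show ?thesis unfolding Lreduced_def q_def[symmetric] N_def[symmetric] M_def D_def .
qed

lemma Lnumerator_mono:
  assumes "0 \<le> y" "y \<le> y'"
  shows "Lnumerator \<alpha> \<theta> y \<le> Lnumerator \<alpha> \<theta> y'"
proof -
  have "y^3 \<le> y'^3" using assms by (intro power_mono) auto
  then show ?thesis
    using assms unfolding Lnumerator_def by (intro diff_right_mono add_mono mult_left_mono) auto
qed

section \<open>Monotonicity of the integrand in \<open>\<theta>\<close>\<close>

lemma cos_double_strict_antimono: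
  assumes "admissible_angle \<alpha> \<theta>" "admissible_angle \<alpha> \<theta>'" "\<theta> < \<theta>'"
  shows "cos (2*\<theta>') < cos (2*\<theta>)"
  using assms unfolding admissible_angle_def by (intro cos_monotone_0_pi) auto

lemma Cconst_sq_mono:
  assumes "admissible_angle \<alpha> \<theta>" "admissible_angle \<alpha> \<theta>'" "\<theta> \<le> \<theta>'"
  shows "(Cconst \<alpha> \<theta>)^2 \<le> (Cconst \<alpha> \<theta>')^2"
proof -
  have "0 \<le> sin (2*\<theta>)" "sin (2*\<theta>) \<le> sin (2*\<theta>')"
    using assms unfolding admissible_angle_def by (auto intro!: sin_ge_zero sin_monotone_2pi_le)
  then have "(sin (2*\<theta>))^2 \<le> (sin (2*\<theta>'))^2" by (intro power_mono) auto
  then show ?thesis unfolding Cconst_def by (simp add: power_divide divide_right_mono)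
qed

lemma Lreduced_at_0: "\<alpha> > 0 \<Longrightarrow> Lreduced \<alpha> \<theta> 0 = - cos (2*\<theta>) / (2*\<alpha>)"
  unfolding Lreduced_def Ppoly_def by (simp add: power2_eq_square)

lemma Lreduced_strict_mono:
  assumes "\<alpha> > 0" "admissible_angle \<alpha> \<theta>" "admissible_angle \<alpha> \<theta>'" "\<theta> < \<theta>'" "\<bar>x\<bar> \<le> 1"
  shows "Lreduced \<alpha> \<theta> x < Lreduced \<alpha> \<theta>' x"
proof (cases "x = 0")
  case True
  then show ?thesis
    using assms(1) cos_double_strict_antimono[OF assms(2-4)]
    by (simp add: Lreduced_at_0 divide_strict_right_mono)
next
  case False
  define A where "A = \<alpha>^2 + (Cconst \<alpha> \<theta>)^2 * x^4"
  define A' where "A' = \<alpha>^2 + (Cconst \<alpha> \<theta>')^2 * x^4"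
  define q where "q = sqrt (Ppoly \<alpha> \<theta> x)"
  define q' where "q' = sqrt (Ppoly \<alpha> \<theta>' x)"
  have P: "Ppoly \<alpha> \<theta> x > 0" "Ppoly \<alpha> \<theta>' x > 0"
    using Ppoly_pos[OF assms(1,2,5)] Ppoly_pos[OF assms(1,3,5)] by auto
  have u: "(Cconst \<alpha> \<theta>)^2 * x^4 \<le> (Cconst \<alpha> \<theta>')^2 * x^4"
    using Cconst_sq_mono[OF assms(2,3)] assms(4) by (simp add: mult_right_mono)
  have "cos (2*\<theta>') * x^2 < cos (2*\<theta>) * x^2"
    using cos_double_strict_antimono[OF assms(2-4)] False by simp
  then have "Ppoly \<alpha> \<theta>' x < Ppoly \<alpha> \<theta> x" using u unfolding Ppoly_def by linarith
  then have "0 < q'" "q' < q" using P unfolding q_def q'_def by simp_all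
  moreover have "0 < A" unfolding A_def using assms(1) by (simp add: add_pos_nonneg)
  ultimately have "A / q < A / q'" by (simp add: divide_strict_left_mono)
  also have "\<dots> \<le> A' / q'" using u \<open>0 < q'\<close> unfolding A_def A'_def by (simp add: divide_right_mono)
  finally have "Lreduced \<alpha> \<theta> x * x^2 < Lreduced \<alpha> \<theta>' x * x^2"
    unfolding Lreduced_mult_sq[OF assms(1) P(1)] Lreduced_mult_sq[OF assms(1) P(2)]
    unfolding A_def A'_def q_def q'_def by simp
  then show ?thesis using False by simp
qed

lemma continuous_on_Lreduced_sin:
  assumes "\<alpha> > 0" "\<And>\<theta>. \<theta> \<in> U \<Longrightarrow> admissible_angle \<alpha> \<theta>"
  shows "continuous_on (U \<times> S) (\<lambda>(\<theta>, \<phi>). Lreduced \<alpha> \<theta> (sin \<phi>))"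
proof -
  have "sqrt (Ppoly \<alpha> (fst z) (sin (snd z))) > 0" if "z \<in> U \<times> S" for z
    using Ppoly_pos[OF assms(1) assms(2) abs_sin_le_one] that by auto
  then have nz: "sqrt (Ppoly \<alpha> (fst z) (sin (snd z))) * (\<alpha> + sqrt (Ppoly \<alpha> (fst z) (sin (snd z)))) \<noteq> 0"
    if "z \<in> U \<times> S" for z
    using that assms(1) by (metis add_pos_pos less_irrefl mult_pos_pos)
  have cont_P: "continuous_on (U \<times> S) (\<lambda>z. Ppoly \<alpha> (fst z) (sin (snd z)))"
    unfolding Ppoly_def Cconst_def by (intro continuous_intros) (use assms(1) in auto)
  have "continuous_on (U \<times> S) (\<lambda>z. Lreduced \<alpha> (fst z) (sin (snd z)))"
    unfolding Lreduced_def Cconst_def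
    by (intro continuous_intros cont_P) (use nz assms(1) in auto)
  then show ?thesis by (simp add: case_prod_beta')
qed

lemma continuous_on_Lreduced_sin_angle:
  assumes "\<alpha> > 0" "admissible_angle \<alpha> \<theta>"
  shows "continuous_on S (\<lambda>\<phi>. Lreduced \<alpha> \<theta> (sin \<phi>))"
proof -
  have "continuous_on ({\<theta>} \<times> S) (\<lambda>(\<theta>, \<phi>). Lreduced \<alpha> \<theta> (sin \<phi>))"
    using assms by (intro continuous_on_Lreduced_sin) auto
  then have "continuous_on S (\<lambda>\<phi>. (\<lambda>(\<theta>, \<phi>). Lreduced \<alpha> \<theta> (sin \<phi>)) (\<theta>, \<phi>))"
    by (rule continuous_on_compose2) (auto intro!: continuous_intros)
  then show ?thesis by simp
qed

section \<open>The substitution \<open>x = sin \<phi>\<close>\<close>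

lemma Lintegrand_eq_Lreduced:
  assumes "\<bar>x\<bar> < 1"
  shows "Lintegrand \<alpha> \<theta> x = Lreduced \<alpha> \<theta> x / sqrt (1 - x^2)"
  unfolding Lintegrand_def Lreduced_def by (simp add: real_sqrt_mult)

lemma isCont_Lintegrand:
  assumes "\<alpha> > 0" "admissible_angle \<alpha> \<theta>" "\<bar>x\<bar> < 1"
  shows "isCont (Lintegrand \<alpha> \<theta>) x"
proof -
  have P: "Ppoly \<alpha> \<theta> x > 0" using assms by (intro Ppoly_pos) auto
  have "1 - x^2 > 0" using assms(3) by (simp add: abs_square_less_1)
  moreover have "\<alpha> + sqrt (Ppoly \<alpha> \<theta> x) > 0" using P assms(1) by (simp add: add_pos_pos)
  ultimately have "sqrt ((1 - x^2) * Ppoly \<alpha> \<theta> x) * (\<alpha> + sqrt (Ppoly \<alpha> \<theta> x)) \<noteq> 0"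
    using P by simp
  moreover have "isCont (Ppoly \<alpha> \<theta>) x" unfolding Ppoly_def by (intro continuous_intros)
  ultimately show ?thesis unfolding Lintegrand_def by (intro continuous_intros)
qed

lemma sin_tendsto_ereal_at_right:
  "((ereal \<circ> sin \<circ> real_of_ereal) \<longlongrightarrow> -1) (at_right (ereal (-pi/2)))"
proof -
  have "(sin \<longlongrightarrow> sin (-pi/2)) (at_right (-pi/2))"
    by (intro tendsto_intros)
  then have "((\<lambda>x. ereal (sin x)) \<longlongrightarrow> ereal (-1)) (at_right (-pi/2))"
    by (simp add: lim_ereal)
  then have "(((\<lambda>x. ereal (sin x)) \<circ> real_of_ereal) \<longlongrightarrow> ereal (-1)) (at_right (ereal (-pi/2)))"
    unfolding ereal_tendsto_simps1 .
  moreover have "(-1::ereal) = ereal (-1)" by (simp add: one_ereal_def)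
  moreover have "ereal \<circ> sin \<circ> real_of_ereal = (\<lambda>x. ereal (sin x)) \<circ> real_of_ereal" by (simp add: o_def)
  ultimately show ?thesis by simp
qed

lemma sin_tendsto_ereal_at_left:
  "((ereal \<circ> sin \<circ> real_of_ereal) \<longlongrightarrow> 1) (at_left (ereal (pi/2)))"
proof -
  have "(sin \<longlongrightarrow> sin (pi/2)) (at_left (pi/2))"
    by (intro tendsto_intros)
  then have "((\<lambda>x. ereal (sin x)) \<longlongrightarrow> ereal 1) (at_left (pi/2))"
    by (simp add: lim_ereal)
  then have "(((\<lambda>x. ereal (sin x)) \<circ> real_of_ereal) \<longlongrightarrow> ereal 1) (at_left (ereal (pi/2)))"
    unfolding ereal_tendsto_simps1 .
  moreover have "(1::ereal) = ereal 1" by (simp add: one_ereal_def)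
  moreover have "ereal \<circ> sin \<circ> real_of_ereal = (\<lambda>x. ereal (sin x)) \<circ> real_of_ereal" by (simp add: o_def)
  ultimately show ?thesis by simp
qed

lemma abs_sin_less_one:
  assumes "\<phi> \<in> {-pi/2<..<pi/2}" shows "\<bar>sin \<phi>\<bar> < 1"
proof -
  have "sin (-pi/2) < sin \<phi>" "sin \<phi> < sin (pi/2)"
    using assms by (intro sin_monotone_2pi; simp)+
  then show ?thesis by auto
qed

lemma half_pi_interval_nonempty: "{-pi/2<..<pi/2::real} \<noteq> {}"
  using pi_gt_zero by (simp del: pi_gt_zero)

lemma LBINT_sin_substitution_nonneg:
  fixes f h :: "real \<Rightarrow> real"
  assumes contf: "\<And>x. \<bar>x\<bar> < 1 \<Longrightarrow> isCont f x"
    and conth: "continuous_on {-pi/2..pi/2} h"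
    and rel: "\<And>\<phi>. \<phi> \<in> {-pi/2<..<pi/2} \<Longrightarrow> f (sin \<phi>) * cos \<phi> = h \<phi>"
    and nonneg: "\<And>\<phi>. \<phi> \<in> {-pi/2<..<pi/2} \<Longrightarrow> h \<phi> \<ge> 0"
  shows "set_integrable lborel (einterval (-1) 1) f"
    and "(LBINT x=-1..1. f x) = integral {-pi/2..pi/2} h"
proof -
  have cos_pos: "cos \<phi> > 0" if "\<phi> \<in> {-pi/2<..<pi/2}" for \<phi>
    using that by (intro cos_gt_zero_pi) auto
  have int_h: "set_integrable lborel {-pi/2..pi/2} h"
    by (rule borel_integrable_atLeastAtMost') (rule conth)
  have "set_integrable lborel (einterval (ereal (-pi/2)) (ereal (pi/2))) h"
    by (rule set_integrable_subset[OF int_h]) (auto simp: einterval_eq)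
  moreover have "set_integrable lborel (einterval (ereal (-pi/2)) (ereal (pi/2))) (\<lambda>x. f (sin x) * cos x)
      \<longleftrightarrow> set_integrable lborel (einterval (ereal (-pi/2)) (ereal (pi/2))) h"
    unfolding set_integrable_def
    by (intro arg_cong[where f = "integrable lborel"] ext) (auto simp: einterval_eq indicator_def rel)
  ultimately have int_fg:
    "set_integrable lborel (einterval (ereal (-pi/2)) (ereal (pi/2))) (\<lambda>x. f (sin x) * cos x)"
    by simp
  have f_sin: "isCont f (sin \<phi>)" "0 \<le> f (sin \<phi>)"
    if "ereal (-pi/2) < ereal \<phi>" "ereal \<phi> < ereal (pi/2)" for \<phi>
  proof -
    have \<phi>: "\<phi> \<in> {-pi/2<..<pi/2}" using that by simp
    show "isCont f (sin \<phi>)" by (rule contf[OF abs_sin_less_one[OF \<phi>]])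
    show "0 \<le> f (sin \<phi>)"
      using rel[OF \<phi>] nonneg[OF \<phi>] cos_pos[OF \<phi>] by (metis zero_le_mult_iff not_le)
  qed
  have cos_nonneg: "0 \<le> cos \<phi>" if "ereal (-pi/2) \<le> ereal \<phi>" "ereal \<phi> \<le> ereal (pi/2)" for \<phi>
    using that by (intro cos_ge_zero) auto
  note subst = interval_integral_substitution_nonneg[of "ereal (-pi/2)" "ereal (pi/2)" sin cos f,
      OF _ DERIV_sin f_sin(1) isCont_cos f_sin(2) cos_nonneg
      sin_tendsto_ereal_at_right sin_tendsto_ereal_at_left int_fg]
  then show "set_integrable lborel (einterval (-1) 1) f" by simp
  have "(LBINT x=ereal (-pi/2)..ereal (pi/2). f (sin x) * cos x) = (LBINT x=ereal (-pi/2)..ereal (pi/2). h x)"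
    by (rule interval_integral_cong) (auto simp: einterval_eq rel)
  also have "\<dots> = integral {-pi/2..pi/2} h"
    by (rule interval_integral_eq_integral) (use int_h in auto)
  finally show "(LBINT x=-1..1. f x) = integral {-pi/2..pi/2} h" using subst by simp
qed

lemma LBINT_sin_substitution:
  fixes f h :: "real \<Rightarrow> real"
  assumes contf: "\<And>x. \<bar>x\<bar> < 1 \<Longrightarrow> isCont f x"
    and conth: "continuous_on {-pi/2..pi/2} h"
    and rel: "\<And>\<phi>. \<phi> \<in> {-pi/2<..<pi/2} \<Longrightarrow> f (sin \<phi>) * cos \<phi> = h \<phi>"
  shows "(LBINT x=-1..1. f x) = integral {-pi/2..pi/2} h"
proof -
  \<comment> \<open>The library rule needs a nonnegative integrand, so shift \<open>f\<close> by \<open>B / sqrt (1 - x\<^sup>2)\<close>,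
    which corresponds to the constant \<open>B \<ge> \<bar>h\<bar>\<close>, and subtract the two substitutions.\<close>
  obtain B where B: "\<And>\<phi>. \<phi> \<in> {-pi/2..pi/2} \<Longrightarrow> \<bar>h \<phi>\<bar> \<le> B"
    using compact_imp_bounded[OF compact_continuous_image[OF conth compact_Icc]]
    unfolding bounded_iff ball_simps real_norm_def by blast
  define g where "g x = B / sqrt (1 - x^2)" for x
  have cont_g: "isCont g x" if "\<bar>x\<bar> < 1" for x
  proof -
    have "x^2 < 1" using that by (simp add: abs_square_less_1)
    then show ?thesis unfolding g_def by (intro continuous_intros) auto
  qed
  have rel_g: "g (sin \<phi>) * cos \<phi> = B" if "\<phi> \<in> {-pi/2<..<pi/2}" for \<phi>
  proof -
    have "cos \<phi> > 0" using that by (intro cos_gt_zero_pi) auto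
    then show ?thesis unfolding g_def by (simp add: cos_squared_eq[symmetric])
  qed
  have "B \<ge> 0" using B[of 0] by auto
  note sub_g = LBINT_sin_substitution_nonneg[of g "\<lambda>_. B", OF cont_g continuous_on_const rel_g \<open>B \<ge> 0\<close>]
  have cont_fg: "isCont (\<lambda>x. f x + g x) x" if "\<bar>x\<bar> < 1" for x
    using contf[OF that] cont_g[OF that] by (rule continuous_add)
  have cont_hB: "continuous_on {-pi/2..pi/2} (\<lambda>\<phi>. h \<phi> + B)"
    using conth by (intro continuous_intros)
  have rel_fg: "(f (sin \<phi>) + g (sin \<phi>)) * cos \<phi> = h \<phi> + B" if "\<phi> \<in> {-pi/2<..<pi/2}" for \<phi>
    using rel[OF that] rel_g[OF that] by (simp add: distrib_right)
  have hB_nonneg: "h \<phi> + B \<ge> 0" if "\<phi> \<in> {-pi/2<..<pi/2}" for \<phi>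
    using B[of \<phi>] that by auto
  note fg = LBINT_sin_substitution_nonneg[OF cont_fg cont_hB rel_fg hB_nonneg]
  have "(LBINT x=-1..1. f x) = (LBINT x=-1..1. (f x + g x) - g x)" by simp
  also have "\<dots> = (LBINT x=-1..1. f x + g x) - (LBINT x=-1..1. g x)"
    using fg(1) sub_g(1)
    by (intro interval_lebesgue_integral_diff) (auto simp: interval_lebesgue_integrable_def one_ereal_def)
  also have "\<dots> = integral {-pi/2..pi/2} (\<lambda>\<phi>. h \<phi> + B) - integral {-pi/2..pi/2} (\<lambda>_. B)"
    using fg(2) sub_g(2) by simp
  also have "\<dots> = integral {-pi/2..pi/2} h"
    using conth by (simp add: integral_add integrable_continuous_interval)
  finally show ?thesis .
qed

lemma Lfun_eq_integral:
  assumes "\<alpha> > 0" "admissible_angle \<alpha> \<theta>"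
  shows "Lfun \<alpha> \<theta> = integral {-pi/2..pi/2} (\<lambda>\<phi>. Lreduced \<alpha> \<theta> (sin \<phi>))"
  unfolding Lfun_def
proof (rule LBINT_sin_substitution)
  show "continuous_on {-pi/2..pi/2} (\<lambda>\<phi>. Lreduced \<alpha> \<theta> (sin \<phi>))"
    by (rule continuous_on_Lreduced_sin_angle[OF assms])
  fix \<phi> :: real assume \<phi>: "\<phi> \<in> {-pi/2<..<pi/2}"
  then have "cos \<phi> > 0" by (intro cos_gt_zero_pi) auto
  with abs_sin_less_one[OF \<phi>] show "Lintegrand \<alpha> \<theta> (sin \<phi>) * cos \<phi> = Lreduced \<alpha> \<theta> (sin \<phi>)"
    by (simp add: Lintegrand_eq_Lreduced cos_squared_eq[symmetric])
qed (use isCont_Lintegrand[OF assms] in auto)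

lemma Lfun_strict_mono:
  assumes "\<alpha> > 0" "admissible_angle \<alpha> \<theta>" "admissible_angle \<alpha> \<theta>'" "\<theta> < \<theta>'"
  shows "Lfun \<alpha> \<theta> < Lfun \<alpha> \<theta>'"
  unfolding Lfun_eq_integral[OF assms(1,2)] Lfun_eq_integral[OF assms(1,3)]
  using continuous_on_Lreduced_sin_angle[OF assms(1,2)] continuous_on_Lreduced_sin_angle[OF assms(1,3)]
  by (intro integral_less_real Lreduced_strict_mono[OF assms] abs_sin_le_one half_pi_interval_nonempty)

lemma Lfun_at_0_neg:
  assumes "\<alpha> > 0" shows "Lfun \<alpha> 0 < 0"
proof -
  have Lreduced_neg: "Lreduced \<alpha> 0 (sin \<phi>) < 0" for \<phi>
  proof -
    have "sqrt (Ppoly \<alpha> 0 (sin \<phi>)) > 0"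
      using Ppoly_pos[OF assms admissible_angle_0[OF assms] abs_sin_le_one] by simp
    then show ?thesis using assms
      by (simp add: Lreduced_def Cconst_def divide_neg_pos add_pos_pos)
  qed
  have "integral {-pi/2..pi/2} (\<lambda>\<phi>. Lreduced \<alpha> 0 (sin \<phi>)) < integral {-pi/2..pi/2} (\<lambda>_. 0)"
    using continuous_on_Lreduced_sin_angle[OF assms admissible_angle_0[OF assms]] Lreduced_neg
    by (intro integral_less_real half_pi_interval_nonempty continuous_on_const)
  then show ?thesis unfolding Lfun_eq_integral[OF assms admissible_angle_0[OF assms]] by simp
qed

lemma continuous_on_Lfun:
  assumes "\<alpha> > 0" "\<And>\<theta>. \<theta> \<in> U \<Longrightarrow> admissible_angle \<alpha> \<theta>"
  shows "continuous_on U (Lfun \<alpha>)"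
proof -
  have "continuous_on U (\<lambda>\<theta>. integral (cbox (-pi/2) (pi/2)) (\<lambda>\<phi>. Lreduced \<alpha> \<theta> (sin \<phi>)))"
    by (intro integral_continuous_on_param continuous_on_Lreduced_sin assms)
  then show ?thesis
    by (rule continuous_on_cong[THEN iffD1, rotated 2]) (simp_all add: Lfun_eq_integral assms)
qed

lemma admissible_angle_pi_div_4:
  assumes "\<alpha> > 0" "2*\<alpha>^2 > 1" shows "admissible_angle \<alpha> (pi/4)"
proof (cases "\<alpha> > 1")
  case False
  then have v: "-1 \<le> 1 - 2*\<alpha>^2" "1 - 2*\<alpha>^2 < cos (pi/2)"
    using False assms by (auto simp: power_le_one)
  then have "arccos (cos (pi/2)) < arccos (1 - 2*\<alpha>^2)"
    by (intro arccos_less_arccos) auto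
  then show ?thesis using False unfolding admissible_angle_def theta_plus_def by simp
qed (simp add: admissible_angle_def theta_plus_def)

lemma Lfun_pi_div_4_pos:
  assumes "\<alpha> > 0" "2*\<alpha>^2 > 1"
  shows "Lfun \<alpha> (pi/4) > 0"
proof -
  note adm = admissible_angle_pi_div_4[OF assms]
  define f where "f \<phi> = Lreduced \<alpha> (pi/4) (sin \<phi>)" for \<phi>
  have f_eq: "f \<phi> = (Cconst \<alpha> (pi/4))^2 * (sin \<phi>)^2 * (2*\<alpha> + q) / (q * (\<alpha> + q))"
    if "q = sqrt (Ppoly \<alpha> (pi/4) (sin \<phi>))" for \<phi> q
    using that unfolding f_def Lreduced_def by (simp add: algebra_simps)
  have q_pos: "sqrt (Ppoly \<alpha> (pi/4) (sin \<phi>)) > 0" for \<phi>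
    using Ppoly_pos[OF assms(1) adm abs_sin_le_one] by simp
  have f_nonneg: "f \<phi> \<ge> 0" for \<phi>
    using f_eq[OF refl] q_pos[of \<phi>] assms(1) by (simp add: add_pos_pos)
  have "(Cconst \<alpha> (pi/4))^2 > 0" using assms(1) by (simp add: Cconst_def)
  then have f_top: "f (pi/2) > 0"
    using f_eq[OF refl] q_pos[of "pi/2"] assms(1) by (simp add: add_pos_pos)
  have cont: "continuous_on (cbox (-pi/2) (pi/2)) f"
    unfolding f_def cbox_interval by (rule continuous_on_Lreduced_sin_angle[OF assms(1) adm])
  then have int: "f integrable_on cbox (-pi/2) (pi/2)" by (rule integrable_continuous)
  have "integral (cbox (-pi/2) (pi/2)) f \<noteq> 0"
  proof
    assume "integral (cbox (-pi/2) (pi/2)) f = 0"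
    then have "(f has_integral 0) (cbox (-pi/2) (pi/2))" using int by (metis integrable_integral)
    then have "f (pi/2) = 0"
      using cont f_nonneg half_pi_interval_nonempty
      by (intro has_integral_0_cbox_imp_0[of "-pi/2" "pi/2" f]) (auto simp: box_real cbox_interval)
    then show False using f_top by simp
  qed
  moreover have "integral (cbox (-pi/2) (pi/2)) f \<ge> 0"
    using int f_nonneg by (intro integral_nonneg) auto
  ultimately show ?thesis
    unfolding Lfun_eq_integral[OF assms(1) adm] f_def[symmetric] cbox_interval by simp
qed

section \<open>Blow-up near \<open>\<theta>\<^sup>+\<close> when \<open>2\<alpha>\<^sup>2 \<le> 1\<close>\<close>

lemma Cconst_sq_le:
  assumes "\<alpha> > 0" "2*\<alpha>^2 \<le> 1" "admissible_angle \<alpha> \<theta>"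
  shows "(Cconst \<alpha> \<theta>)^2 \<le> 1 - \<alpha>^2"
proof -
  have "(1 - 2*\<alpha>^2)^2 \<le> (cos (2*\<theta>))^2"
    using admissible_cos_double_gt[OF assms(1,3)] assms(2) by (intro power_mono) auto
  then have "(Cconst \<alpha> \<theta>)^2 \<le> (1 - (1 - 2*\<alpha>^2)^2) / (4*\<alpha>^2)"
    unfolding Cconst_sq by (intro divide_right_mono) auto
  also have "\<dots> = 1 - \<alpha>^2" using assms(1) by (simp add: field_simps power2_eq_square)
  finally show ?thesis .
qed

lemma Lnumerator_ge:
  assumes "0 \<le> y" shows "Lnumerator \<alpha> \<theta> y \<ge> - (\<alpha>^2)"
proof -
  have "\<alpha>^2 * cos (2*\<theta>) \<le> \<alpha>^2" by (simp add: mult_left_le)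
  moreover have "0 \<le> 3 * \<alpha>^2 * (Cconst \<alpha> \<theta>)^2 * y" "0 \<le> ((Cconst \<alpha> \<theta>)^2)^2 * y^3"
    using assms by simp_all
  ultimately show ?thesis unfolding Lnumerator_def by linarith
qed

lemma Ppoly_ge:
  assumes "\<alpha> > 0" "admissible_angle \<alpha> \<theta>" "\<bar>x\<bar> \<le> 1"
  shows "(1 - x^2) * \<alpha>^2 \<le> Ppoly \<alpha> \<theta> x"
proof -
  have "(1 - x^2) * \<alpha>^2 \<le> (1 - x^2) * (\<alpha>^2 + (Cconst \<alpha> \<theta>)^2 * x^2)"
    using assms(3) by (intro mult_left_mono) (auto simp: abs_square_le_1)
  moreover have "0 \<le> x^2 * Ppoly \<alpha> \<theta> 1" using Ppoly_one_pos[OF assms(1,2)] by simp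
  ultimately show ?thesis using Ppoly_decomp[of \<alpha> \<theta> x] by linarith
qed

lemma Lreduced_ge_neg:
  assumes "\<alpha> > 0" "admissible_angle \<alpha> \<theta>" "Lnumerator \<alpha> \<theta> (15/16) > 1/2" "\<bar>x\<bar> \<le> 1"
  shows "Lreduced \<alpha> \<theta> x \<ge> -4/\<alpha>"
proof -
  define q where "q = sqrt (Ppoly \<alpha> \<theta> x)"
  define D where "D = \<alpha>^2 + (Cconst \<alpha> \<theta>)^2*x^4 + \<alpha>*q"
  have P: "Ppoly \<alpha> \<theta> x > 0" by (rule Ppoly_pos[OF assms(1,2,4)])
  then have "q > 0" unfolding q_def by simp
  have "D \<ge> \<alpha>^2" unfolding D_def using \<open>q > 0\<close> assms(1) by simp
  moreover have "\<alpha>^2 > 0" using assms(1) by simp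
  ultimately have "D > 0" by linarith
  have qD: "q * D \<ge> q * \<alpha>^2" "q * D > 0"
    using \<open>D \<ge> \<alpha>^2\<close> \<open>D > 0\<close> \<open>q > 0\<close> by (auto intro: mult_left_mono)
  have L: "Lreduced \<alpha> \<theta> x = Lnumerator \<alpha> \<theta> (x^2) / (q * D)"
    unfolding q_def D_def by (rule Lreduced_eq_quotient[OF assms(1) P])
  show ?thesis
  proof (cases "Lnumerator \<alpha> \<theta> (x^2) \<ge> 0")
    case True
    then have "Lreduced \<alpha> \<theta> x \<ge> 0" unfolding L using qD by simp
    moreover have "-4/\<alpha> \<le> 0" using assms(1) by simp
    ultimately show ?thesis by linarith
  next
    case False
    then have "x^2 < 15/16" using Lnumerator_mono[of "15/16" "x^2" \<alpha> \<theta>] assms(3) by linarith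
    have "(\<alpha>/4)^2 = (1/16) * \<alpha>^2" by (simp add: power_divide)
    also have "\<dots> \<le> (1 - x^2) * \<alpha>^2" using \<open>x^2 < 15/16\<close> by (intro mult_right_mono) auto
    also have "\<dots> \<le> Ppoly \<alpha> \<theta> x" by (rule Ppoly_ge[OF assms(1,2,4)])
    finally have "\<alpha>/4 \<le> q" unfolding q_def by (rule real_le_rsqrt)
    have "Lreduced \<alpha> \<theta> x \<ge> - (\<alpha>^2) / (q * D)"
      unfolding L using qD Lnumerator_ge[of "x^2"] by (intro divide_right_mono) auto
    moreover have "\<alpha>^2 / (q * D) \<le> \<alpha>^2 / (q * \<alpha>^2)"
      using qD \<open>q > 0\<close> assms(1) by (intro divide_left_mono) auto
    moreover have "\<alpha>^2 / (q * \<alpha>^2) \<le> 4/\<alpha>"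
      using \<open>\<alpha>/4 \<le> q\<close> \<open>q > 0\<close> assms(1) by (simp add: field_simps)
    ultimately show ?thesis by simp
  qed
qed

lemma sqrt_Ppoly_le_near_one:
  assumes "\<alpha> > 0" "2*\<alpha>^2 \<le> 1" "admissible_angle \<alpha> \<theta>" "\<delta> > 0" "Ppoly \<alpha> \<theta> 1 < \<delta>^2" "\<bar>x\<bar> \<le> 1"
  shows "sqrt (Ppoly \<alpha> \<theta> x) \<le> sqrt (1 - x^2) + \<delta>"
proof -
  define s where "s = sqrt (1 - x^2)"
  have x2: "x^2 \<le> 1" using assms(6) by (simp add: abs_square_le_1)
  then have "s \<ge> 0" "s^2 = 1 - x^2" unfolding s_def by simp_all
  have "(Cconst \<alpha> \<theta>)^2 * x^2 \<le> (Cconst \<alpha> \<theta>)^2" using x2 by (simp add: mult_left_le)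
  then have "\<alpha>^2 + (Cconst \<alpha> \<theta>)^2 * x^2 \<le> 1" using Cconst_sq_le[OF assms(1-3)] by linarith
  then have "(1 - x^2) * (\<alpha>^2 + (Cconst \<alpha> \<theta>)^2 * x^2) \<le> s^2"
    using x2 \<open>s^2 = 1 - x^2\<close> by (simp add: mult_left_le)
  moreover have "x^2 * Ppoly \<alpha> \<theta> 1 \<le> Ppoly \<alpha> \<theta> 1"
    using x2 Ppoly_one_pos[OF assms(1,3)] by (simp add: mult_left_le_one_le)
  moreover have "s^2 + \<delta>^2 \<le> (s + \<delta>)^2"
    using \<open>s \<ge> 0\<close> assms(4) by (simp add: power2_sum)
  ultimately have "Ppoly \<alpha> \<theta> x \<le> (s + \<delta>)^2"
    using Ppoly_decomp[of \<alpha> \<theta> x] assms(5) by linarith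
  then have "sqrt (Ppoly \<alpha> \<theta> x) \<le> sqrt ((s + \<delta>)^2)" by (rule real_sqrt_le_mono)
  then show ?thesis unfolding s_def[symmetric] using \<open>s \<ge> 0\<close> assms(4) by simp
qed

lemma Lreduced_quotient_factor_le:
  assumes "\<alpha> > 0" "2*\<alpha>^2 \<le> 1" "admissible_angle \<alpha> \<theta>" "\<bar>x\<bar> \<le> 1"
  shows "\<alpha>^2 + (Cconst \<alpha> \<theta>)^2*x^4 + \<alpha> * sqrt (Ppoly \<alpha> \<theta> x) \<le> 3"
proof -
  have x2: "x^2 \<le> 1" using assms(4) by (simp add: abs_square_le_1)
  have \<alpha>1: "\<alpha>^2 \<le> 1" using assms(2) by simp
  then have "\<alpha> \<le> 1" by (simp add: abs_square_le_1)
  have "cos (2*\<theta>) * x^2 \<le> 1"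
    using admissible_cos_double_nonneg[OF assms(3)] x2 by (simp add: mult_le_one)
  moreover have "(Cconst \<alpha> \<theta>)^2 * x^4 \<ge> 0" by simp
  ultimately have "Ppoly \<alpha> \<theta> x \<le> 4" using \<alpha>1 unfolding Ppoly_def by linarith
  then have "sqrt (Ppoly \<alpha> \<theta> x) \<le> sqrt (2^2)" by (intro real_sqrt_le_mono) simp
  then have "sqrt (Ppoly \<alpha> \<theta> x) \<le> 2" by simp
  moreover have "0 \<le> sqrt (Ppoly \<alpha> \<theta> x)" using Ppoly_pos[OF assms(1,3,4)] by simp
  ultimately have "\<alpha> * sqrt (Ppoly \<alpha> \<theta> x) \<le> 1 * 2" using \<open>\<alpha> \<le> 1\<close> by (intro mult_mono) auto
  moreover have "(x^2)^2 \<le> 1" by (rule power_le_one) (use x2 in auto)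
  then have "(Cconst \<alpha> \<theta>)^2 * x^4 \<le> (Cconst \<alpha> \<theta>)^2" by (simp add: mult_left_le power_mult[symmetric])
  ultimately show ?thesis using Cconst_sq_le[OF assms(1-3)] \<alpha>1 by linarith
qed

lemma Lreduced_ge_near_one:
  assumes "\<alpha> > 0" "2*\<alpha>^2 \<le> 1" "admissible_angle \<alpha> \<theta>" "Lnumerator \<alpha> \<theta> (15/16) > 1/2"
    and "\<delta> > 0" "Ppoly \<alpha> \<theta> 1 < \<delta>^2" and "15/16 \<le> x^2" "\<bar>x\<bar> \<le> 1"
  shows "Lreduced \<alpha> \<theta> x \<ge> 1 / (6 * (sqrt (1 - x^2) + \<delta>))"
proof -
  define q where "q = sqrt (Ppoly \<alpha> \<theta> x)"
  define D where "D = \<alpha>^2 + (Cconst \<alpha> \<theta>)^2*x^4 + \<alpha>*q"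
  define s where "s = sqrt (1 - x^2)"
  have P: "Ppoly \<alpha> \<theta> x > 0" by (rule Ppoly_pos[OF assms(1,3,8)])
  then have "q > 0" unfolding q_def by simp
  then have "D > 0" unfolding D_def using assms(1) by (simp add: add_pos_nonneg)
  have "s \<ge> 0" unfolding s_def using assms(8) by (simp add: abs_square_le_1)
  have "q * D \<le> (s + \<delta>) * 3"
    using sqrt_Ppoly_le_near_one[OF assms(1-3,5,6,8)] Lreduced_quotient_factor_le[OF assms(1-3,8)]
      \<open>q > 0\<close> \<open>D > 0\<close> \<open>s \<ge> 0\<close> assms(5) unfolding q_def D_def s_def by (intro mult_mono) auto
  then have "1 / (6 * (s + \<delta>)) \<le> (1/2) / (q * D)"
    using \<open>q > 0\<close> \<open>D > 0\<close> \<open>s \<ge> 0\<close> assms(5) by (simp add: field_simps)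
  also have "\<dots> \<le> Lnumerator \<alpha> \<theta> (x^2) / (q * D)"
    using Lnumerator_mono[OF _ assms(7), of \<alpha> \<theta>] assms(4) \<open>q > 0\<close> \<open>D > 0\<close>
    by (intro divide_right_mono) auto
  also have "\<dots> = Lreduced \<alpha> \<theta> x"
    unfolding q_def D_def by (rule Lreduced_eq_quotient[OF assms(1) P, symmetric])
  finally show ?thesis unfolding s_def .
qed

lemma Lreduced_sin_ge_near_half_pi:
  assumes "\<alpha> > 0" "2*\<alpha>^2 \<le> 1" "admissible_angle \<alpha> \<theta>" "Lnumerator \<alpha> \<theta> (15/16) > 1/2"
    and "\<delta> > 0" "Ppoly \<alpha> \<theta> 1 < \<delta>^2" and "\<phi> \<in> {pi/2 - 1/4..pi/2}"
  shows "Lreduced \<alpha> \<theta> (sin \<phi>) \<ge> 1 / (6 * (pi/2 - \<phi> + \<delta>))"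
proof -
  have "cos \<phi> \<ge> 0" using assms(7) pi_gt3 by (intro cos_ge_zero) auto
  have "cos \<phi> = sin (pi/2 - \<phi>)" by (simp add: sin_cos_eq)
  also have "\<dots> \<le> pi/2 - \<phi>" using assms(7) by (intro sin_x_le_x) auto
  finally have cos_le: "cos \<phi> \<le> pi/2 - \<phi>" .
  then have "(cos \<phi>)^2 \<le> (1/4)^2" using assms(7) \<open>cos \<phi> \<ge> 0\<close> by (intro power_mono) auto
  then have "15/16 \<le> (sin \<phi>)^2" by (simp add: sin_squared_eq power_divide)
  then have "1 / (6 * (sqrt (1 - (sin \<phi>)^2) + \<delta>)) \<le> Lreduced \<alpha> \<theta> (sin \<phi>)"
    by (rule Lreduced_ge_near_one[OF assms(1-6) _ abs_sin_le_one])
  moreover have "sqrt (1 - (sin \<phi>)^2) = cos \<phi>" using \<open>cos \<phi> \<ge> 0\<close> by (simp add: cos_squared_eq[symmetric])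
  moreover have "1 / (6 * (pi/2 - \<phi> + \<delta>)) \<le> 1 / (6 * (cos \<phi> + \<delta>))"
    using cos_le \<open>cos \<phi> \<ge> 0\<close> assms(5) by (intro divide_left_mono mult_left_mono) auto
  ultimately show ?thesis by simp
qed

lemma has_integral_inverse_distance:
  fixes a b c \<delta> :: real
  assumes "c > 0" "\<delta> > 0" "a \<le> b"
  shows "((\<lambda>\<phi>. 1 / (c * (b - \<phi> + \<delta>))) has_integral (ln (b - a + \<delta>) - ln \<delta>) / c) {a..b}"
proof -
  define F where "F \<phi> = - ln (b - \<phi> + \<delta>) / c" for \<phi>
  have "((\<lambda>\<phi>. 1 / (c * (b - \<phi> + \<delta>))) has_integral (F b - F a)) {a..b}"
  proof (rule fundamental_theorem_of_calculus[OF assms(3)])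
    fix x assume "x \<in> {a..b}"
    then have "b - x + \<delta> > 0" using assms(2) by auto
    then have "(F has_real_derivative 1 / (c * (b - x + \<delta>))) (at x)"
      unfolding F_def using assms(1) by (auto intro!: derivative_eq_intros simp: divide_simps)
    then show "(F has_vector_derivative 1 / (c * (b - x + \<delta>))) (at x within {a..b})"
      by (simp add: has_real_derivative_iff_has_vector_derivative has_vector_derivative_at_within)
  qed
  moreover have "F b - F a = (ln (b - a + \<delta>) - ln \<delta>) / c"
    unfolding F_def by (simp add: diff_divide_distrib)
  ultimately show ?thesis by simp
qed

lemma integral_Lreduced_sin_ge:
  assumes "\<alpha> > 0" "admissible_angle \<alpha> \<theta>" "Lnumerator \<alpha> \<theta> (15/16) > 1/2" "a \<le> b"
  shows "integral {a..b} (\<lambda>\<phi>. Lreduced \<alpha> \<theta> (sin \<phi>)) \<ge> (b - a) * (-4/\<alpha>)"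
proof -
  have "integral {a..b} (\<lambda>\<phi>. Lreduced \<alpha> \<theta> (sin \<phi>)) \<ge> integral {a..b} (\<lambda>_. -4/\<alpha>)"
    using Lreduced_ge_neg[OF assms(1-3) abs_sin_le_one]
    by (intro integral_le integrable_continuous_interval continuous_on_Lreduced_sin_angle[OF assms(1,2)])
      auto
  then show ?thesis using assms(4) by simp
qed

lemma integral_Lreduced_sin_near_half_pi_ge:
  assumes "\<alpha> > 0" "2*\<alpha>^2 \<le> 1" "admissible_angle \<alpha> \<theta>" "Lnumerator \<alpha> \<theta> (15/16) > 1/2"
    and "\<delta> > 0" "Ppoly \<alpha> \<theta> 1 < \<delta>^2"
  shows "6 * integral {pi/2 - 1/4..pi/2} (\<lambda>\<phi>. Lreduced \<alpha> \<theta> (sin \<phi>)) \<ge> ln (1/4 + \<delta>) - ln \<delta>"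
proof -
  have log: "((\<lambda>\<phi>. 1 / (6 * (pi/2 - \<phi> + \<delta>))) has_integral (ln (1/4 + \<delta>) - ln \<delta>) / 6)
      {pi/2 - 1/4..pi/2}"
    using has_integral_inverse_distance[of 6 \<delta> "pi/2 - 1/4" "pi/2"] assms(5) by simp
  have "integral {pi/2 - 1/4..pi/2} (\<lambda>\<phi>. 1 / (6 * (pi/2 - \<phi> + \<delta>)))
      \<le> integral {pi/2 - 1/4..pi/2} (\<lambda>\<phi>. Lreduced \<alpha> \<theta> (sin \<phi>))"
    using Lreduced_sin_ge_near_half_pi[OF assms]
    by (intro integral_le has_integral_integrable[OF log] integrable_continuous_interval
        continuous_on_Lreduced_sin_angle[OF assms(1,3)]) auto
  then show ?thesis using integral_unique[OF log] by simp
qed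

lemma Lfun_pos_of_bounds:
  assumes "\<alpha> > 0" "2*\<alpha>^2 \<le> 1" "admissible_angle \<alpha> \<theta>" "Lnumerator \<alpha> \<theta> (15/16) > 1/2"
    and "Ppoly \<alpha> \<theta> 1 < (exp (-(24*pi/\<alpha> + 1)) / 4)^2"
  shows "Lfun \<alpha> \<theta> > 0"
proof -
  \<comment> \<open>\<open>\<delta>\<close> is chosen so that the gain \<open>ln (1/(4\<delta>)) / 6\<close> near \<open>\<pi>/2\<close> exceeds the loss \<open>4\<pi>/\<alpha>\<close>
    elsewhere by \<open>1/6\<close>.\<close>
  define \<delta> where "\<delta> = exp (-(24*pi/\<alpha> + 1)) / 4"
  define f where "f \<phi> = Lreduced \<alpha> \<theta> (sin \<phi>)" for \<phi>
  have "\<delta> > 0" unfolding \<delta>_def by simp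
  have \<phi>\<^sub>0: "-pi/2 \<le> pi/2 - 1/4" "pi/2 - 1/4 \<le> pi/2" using pi_gt3 by auto
  have "integral {-pi/2..pi/2 - 1/4} f \<ge> (pi - 1/4) * (-4/\<alpha>)"
    using integral_Lreduced_sin_ge[OF assms(1,3,4) \<phi>\<^sub>0(1)] unfolding f_def by simp
  moreover have "(pi - 1/4) * (-4/\<alpha>) \<ge> -4 * (pi/\<alpha>)"
    using assms(1) by (simp add: field_simps)
  ultimately have left: "integral {-pi/2..pi/2 - 1/4} f \<ge> -4 * (pi/\<alpha>)" by linarith
  have "ln (1/4) \<le> ln (1/4 + \<delta>)" using \<open>\<delta> > 0\<close> by simp
  moreover have "ln \<delta> = ln (1/4) - (24 * (pi/\<alpha>) + 1)" unfolding \<delta>_def by (simp add: ln_div)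
  moreover note integral_Lreduced_sin_near_half_pi_ge[OF assms(1-4) \<open>\<delta> > 0\<close> assms(5)[folded \<delta>_def]]
  ultimately have right: "integral {pi/2 - 1/4..pi/2} f \<ge> 4 * (pi/\<alpha>) + 1/6"
    unfolding f_def by linarith
  have "integral {-pi/2..pi/2 - 1/4} f + integral {pi/2 - 1/4..pi/2} f = integral {-pi/2..pi/2} f"
    using \<phi>\<^sub>0 continuous_on_Lreduced_sin_angle[OF assms(1,3)] unfolding f_def
    by (intro Henstock_Kurzweil_Integration.integral_combine integrable_continuous_interval)
  with left right have "integral {-pi/2..pi/2} f > 0" by linarith
  then show ?thesis unfolding Lfun_eq_integral[OF assms(1,3)] f_def .
qed

lemma theta_plus_small:
  assumes "\<alpha> > 0" "2*\<alpha>^2 \<le> 1"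
  shows "cos (2 * theta_plus \<alpha>) = 1 - 2*\<alpha>^2" "theta_plus \<alpha> \<le> pi/4"
proof -
  have "\<alpha>^2 \<le> 1" using assms(2) by simp
  then have "\<not> \<alpha> > 1" by (simp add: abs_square_le_1)
  then have T: "theta_plus \<alpha> = arccos (1 - 2*\<alpha>^2) / 2" by (simp add: theta_plus_def)
  have v: "0 \<le> 1 - 2*\<alpha>^2" "1 - 2*\<alpha>^2 \<le> 1" using assms by auto
  then show "cos (2 * theta_plus \<alpha>) = 1 - 2*\<alpha>^2" unfolding T by simp
  have "arccos (1 - 2*\<alpha>^2) \<le> arccos 0" using v by (intro arccos_le_arccos) auto
  then show "theta_plus \<alpha> \<le> pi/4" unfolding T by simp
qed

lemma exists_Lfun_pos_small:
  assumes "\<alpha> > 0" "2*\<alpha>^2 \<le> 1"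
  shows "\<exists>\<theta>. 0 < \<theta> \<and> admissible_angle \<alpha> \<theta> \<and> Lfun \<alpha> \<theta> > 0"
proof -
  define T where "T = theta_plus \<alpha>"
  define \<delta> where "\<delta> = exp (-(24*pi/\<alpha> + 1)) / 4"
  have cos_T: "cos (2*T) = 1 - 2*\<alpha>^2" unfolding T_def by (rule theta_plus_small(1)[OF assms])
  have C_T: "(Cconst \<alpha> T)^2 = 1 - \<alpha>^2"
    unfolding Cconst_sq cos_T using assms(1) by (simp add: field_simps power2_eq_square)
  have "Lnumerator \<alpha> T (15/16) * 4096 = 47 * \<alpha>^4 + 674 * \<alpha>^2 + 3375"
    unfolding Lnumerator_def C_T cos_T by (simp add: field_simps power2_eq_square eval_nat_numeral)
  moreover have "47 * \<alpha>^4 + 674 * \<alpha>^2 \<ge> 0" by simp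
  ultimately have num_T: "Lnumerator \<alpha> T (15/16) > 1/2" by linarith
  have P_T: "Ppoly \<alpha> T 1 < \<delta>^2"
    unfolding Ppoly_one C_T cos_T \<delta>_def by simp
  have "((\<lambda>\<theta>. Lnumerator \<alpha> \<theta> (15/16)) \<longlongrightarrow> Lnumerator \<alpha> T (15/16)) (at_left T)"
    unfolding Lnumerator_def Cconst_def by (intro tendsto_intros) (use assms(1) in auto)
  then have "eventually (\<lambda>\<theta>. Lnumerator \<alpha> \<theta> (15/16) > 1/2) (at_left T)"
    using num_T by (rule order_tendstoD(1))
  moreover have "((\<lambda>\<theta>. Ppoly \<alpha> \<theta> 1) \<longlongrightarrow> Ppoly \<alpha> T 1) (at_left T)"
    unfolding Ppoly_def Cconst_def by (intro tendsto_intros) (use assms(1) in auto)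
  then have "eventually (\<lambda>\<theta>. Ppoly \<alpha> \<theta> 1 < \<delta>^2) (at_left T)"
    using P_T by (rule order_tendstoD(2))
  moreover have "eventually (\<lambda>\<theta>. \<theta> \<in> {0<..<T}) (at_left T)"
    using theta_plus_pos[OF assms(1)] unfolding T_def by (rule eventually_at_left_real)
  ultimately have "eventually (\<lambda>\<theta>. Lnumerator \<alpha> \<theta> (15/16) > 1/2 \<and> Ppoly \<alpha> \<theta> 1 < \<delta>^2 \<and> \<theta> \<in> {0<..<T})
      (at_left T)"
    by (auto intro: eventually_conj)
  then obtain \<theta> where \<theta>: "Lnumerator \<alpha> \<theta> (15/16) > 1/2" "Ppoly \<alpha> \<theta> 1 < \<delta>^2" "\<theta> \<in> {0<..<T}"
    using eventually_happens'[OF trivial_limit_at_left_real] by blast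
  then have "admissible_angle \<alpha> \<theta>"
    using theta_plus_small(2)[OF assms] unfolding admissible_angle_def T_def by auto
  with \<theta> show ?thesis using Lfun_pos_of_bounds[OF assms] unfolding \<delta>_def by auto
qed

lemma exists_Lfun_pos:
  assumes "\<alpha> > 0"
  shows "\<exists>\<theta>. 0 < \<theta> \<and> admissible_angle \<alpha> \<theta> \<and> Lfun \<alpha> \<theta> > 0"
proof (cases "2*\<alpha>^2 > 1")
  case True
  then show ?thesis
    using admissible_angle_pi_div_4 Lfun_pi_div_4_pos assms by (intro exI[of _ "pi/4"]) auto
qed (use exists_Lfun_pos_small[OF assms] in auto)

theorem lemma4p5:
  fixes \<alpha> :: real
  assumes "\<alpha> > 0"
  shows "\<exists>!\<theta>. \<theta> \<in> {0<..<theta_plus \<alpha>} \<inter> {0<..<pi/4} \<and> Lfun \<alpha> \<theta> = 0"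
proof -
  obtain \<theta>\<^sub>1 where \<theta>\<^sub>1: "0 < \<theta>\<^sub>1" "admissible_angle \<alpha> \<theta>\<^sub>1" "Lfun \<alpha> \<theta>\<^sub>1 > 0"
    using exists_Lfun_pos[OF assms] by blast
  have adm: "admissible_angle \<alpha> \<theta>" if "\<theta> \<in> {0..\<theta>\<^sub>1}" for \<theta>
    using that \<theta>\<^sub>1(2) unfolding admissible_angle_def by auto
  have "Lfun \<alpha> 0 \<le> 0" "0 \<le> Lfun \<alpha> \<theta>\<^sub>1" using Lfun_at_0_neg[OF assms] \<theta>\<^sub>1(3) by simp_all
  from IVT'[OF this less_imp_le[OF \<theta>\<^sub>1(1)] continuous_on_Lfun[OF assms adm]]
  obtain \<theta> where \<theta>: "\<theta> \<in> {0..\<theta>\<^sub>1}" "Lfun \<alpha> \<theta> = 0" by auto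
  have "\<theta> \<noteq> 0" "\<theta> \<noteq> \<theta>\<^sub>1" using \<theta> \<theta>\<^sub>1 Lfun_at_0_neg[OF assms] by auto
  then have "\<theta> \<in> {0<..<theta_plus \<alpha>} \<inter> {0<..<pi/4}"
    using \<theta>(1) \<theta>\<^sub>1(2) unfolding admissible_angle_def by auto
  moreover have "\<theta>' = \<theta>" if "\<theta>' \<in> {0<..<theta_plus \<alpha>} \<inter> {0<..<pi/4}" "Lfun \<alpha> \<theta>' = 0" for \<theta>'
  proof -
    have "admissible_angle \<alpha> \<theta>'" using that(1) unfolding admissible_angle_def by auto
    note mono = Lfun_strict_mono[OF assms adm[OF \<theta>(1)] this] Lfun_strict_mono[OF assms this adm[OF \<theta>(1)]]
    show ?thesis using mono that(2) \<theta>(2) by (cases \<theta> \<theta>' rule: linorder_cases) auto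
  qed
  ultimately show ?thesis using \<theta>(2) by blast
qed

end
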